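(* Let $\ell\ge 1$ and $n$ be positive integers and let $\mathcal{C}$ be a family of $(\ell+1)$-subsets of $[n]$. Then $\mathcal{C}$ satisfies the condition (C$_{\ell+1}$): if $C_1, C_2 \in \mathcal{C}$ and $|C_1\cup C_2| = \ell+2$, then every $(\ell+1)$-subset $C_3$ of $C_1\cup C_2$ belongs to $\mathcal{C}$, if and only if there exists an $\ell$-generic matroid on $[n]$ whose family of all $(\ell+1)$-circuits is equal to $\mathcal{C}$.
   Context: $[n]=\{1,\ldots,n\}$. A matroid is $\ell$-generic if it has no circuits of cardinality $i$ for any $i\le\ell$. An $(\ell+1)$-circuit is a circuit of cardinality $\ell+1$. *)

theory Defs
  imports Main
begin

definition matroid :: "'a set \<Rightarrow> 'a set set \<Rightarrow> bool" where
  "matroid E I \<longleftrightarrow>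
     finite E \<and> (\<forall>X\<in>I. X \<subseteq> E) \<and> {} \<in> I \<and>
     (\<forall>X Y. X \<in> I \<and> Y \<subseteq> X \<longrightarrow> Y \<in> I) \<and>
     (\<forall>X Y. X \<in> I \<and> Y \<in> I \<and> card X < card Y \<longrightarrow> (\<exists>e\<in>Y - X. insert e X \<in> I))"

definition circuits :: "'a set \<Rightarrow> 'a set set \<Rightarrow> 'a set set" where
  "circuits E I = {C. C \<subseteq> E \<and> C \<notin> I \<and> (\<forall>D. D \<subset> C \<longrightarrow> D \<in> I)}"

definition generic :: "nat \<Rightarrow> 'a set \<Rightarrow> 'a set set \<Rightarrow> bool" where
  "generic l E I \<longleftrightarrow> (\<forall>C\<in>circuits E I. \<not> card C \<le> l)"

end

theory Submission
  imports Defs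
begin

text \<open>
  If \<open>\<C>\<close> satisfies the elimination condition, declare a set independent when it has at most
  \<open>l + 1\<close> elements and is not a member of \<open>\<C>\<close>. The only nontrivial matroid axiom is augmentation
  of an \<open>l\<close>-set \<open>X\<close> by an \<open>(l + 1)\<close>-set \<open>Y \<notin> \<C>\<close>; if it failed, every \<open>insert e X\<close> with
  \<open>e \<in> Y - X\<close> would lie in \<open>\<C>\<close>, and repeated elimination, exchanging the elements of \<open>X\<close> one
  at a time, would force \<open>Y \<in> \<C>\<close>. Conversely, in an \<open>l\<close>-generic matroid every \<open>l\<close>-set is
  independent, so two \<open>(l + 1)\<close>-circuits with an \<open>(l + 2)\<close>-element union meet in an independent
  \<open>l\<close>-set; augmenting it inside an independent \<open>(l + 1)\<close>-subset of the union would rebuild one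
  of the two circuits, so every such subset is a circuit.
\<close>

definition elimination_closed :: "nat \<Rightarrow> 'a set set \<Rightarrow> bool" where
  "elimination_closed l \<C> \<longleftrightarrow>
     (\<forall>C1\<in>\<C>. \<forall>C2\<in>\<C>. card (C1 \<union> C2) = l + 2 \<longrightarrow>
        (\<forall>C3. C3 \<subseteq> C1 \<union> C2 \<and> card C3 = l + 1 \<longrightarrow> C3 \<in> \<C>))"

lemma elimination_closedD:
  assumes "elimination_closed l \<C>" "C1 \<in> \<C>" "C2 \<in> \<C>" "card (C1 \<union> C2) = l + 2"
    and "C3 \<subseteq> C1 \<union> C2" "card C3 = l + 1"
  shows "C3 \<in> \<C>"
  using assms unfolding elimination_closed_def by blast

lemma elimination_closed_exchange:
  assumes closed: "elimination_closed l \<C>" and Z: "finite Z" "card Z = l + 1" "x \<notin> Z"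
    and e12: "e1 \<in> Z" "e2 \<in> Z" "e1 \<noteq> e2"
    and C1: "insert x (Z - {e1}) \<in> \<C>" and C2: "insert x (Z - {e2}) \<in> \<C>"
  shows "Z \<in> \<C>"
proof (rule elimination_closedD[OF closed C1 C2 _ _ Z(2)])
  have union: "insert x (Z - {e1}) \<union> insert x (Z - {e2}) = insert x Z"
    using e12 by blast
  then show "card (insert x (Z - {e1}) \<union> insert x (Z - {e2})) = l + 2"
    using Z by simp
  show "Z \<subseteq> insert x (Z - {e1}) \<union> insert x (Z - {e2})"
    unfolding union by blast
qed

lemma elimination_closed_fan:
  assumes closed: "elimination_closed l \<C>"
    and X: "finite X" "card X = l" and disjoint: "X \<inter> W = {}"
    and fan: "\<And>e. e \<in> W \<Longrightarrow> insert e X \<in> \<C>"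
  shows "Z \<subseteq> X \<union> W \<Longrightarrow> card Z = l + 1 \<Longrightarrow> card (Z \<inter> W) = Suc m \<Longrightarrow> Z \<in> \<C>"
proof (induction m arbitrary: Z)
  case 0
  then obtain e where e: "Z \<inter> W = {e}"
    by (auto simp: card_Suc_eq)
  then have "e \<in> Z"
    by blast
  then have "Z - {e} \<subseteq> X" "card (Z - {e}) = card X"
    using 0 X(2) e by auto
  then have "Z = insert e X"
    using card_subset_eq[OF X(1)] e by blast
  then show ?case
    using e fan by blast
next
  case (Suc m)
  have "finite Z"
    using Suc.prems(2) by (intro card_ge_0_finite) simp
  obtain e1 e2 where e12: "e1 \<in> Z \<inter> W" "e2 \<in> Z \<inter> W" "e1 \<noteq> e2"
    using card_le_Suc0_iff_eq[of "Z \<inter> W"] Suc.prems(3) \<open>finite Z\<close> by auto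
  have "Z \<inter> X = Z - Z \<inter> W"
    using Suc.prems(1) disjoint by blast
  moreover have "card (Z \<inter> W) \<le> card Z"
    using \<open>finite Z\<close> by (simp add: card_mono)
  ultimately have "card (Z \<inter> X) < card X"
    using Suc.prems \<open>finite Z\<close> X by (simp add: card_Diff_subset)
  then have "\<not> X \<subseteq> Z"
    using Int_absorb1 by fastforce
  then obtain x where x: "x \<in> X" "x \<notin> Z"
    by blast
  have swap: "insert x (Z - {e}) \<in> \<C>" if e: "e \<in> Z \<inter> W" for e
  proof (rule Suc.IH)
    show "insert x (Z - {e}) \<subseteq> X \<union> W"
      using Suc.prems(1) x by blast
    show "card (insert x (Z - {e})) = l + 1"
      using Suc.prems(2) \<open>finite Z\<close> e x by simp
    have "insert x (Z - {e}) \<inter> W = Z \<inter> W - {e}"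
      using x disjoint by blast
    then show "card (insert x (Z - {e}) \<inter> W) = Suc m"
      using Suc.prems(3) \<open>finite Z\<close> e by simp
  qed
  show ?case
    using elimination_closed_exchange[OF closed \<open>finite Z\<close> Suc.prems(2) x(2)]
      e12 swap[OF e12(1)] swap[OF e12(2)] by blast
qed

definition paving_indep :: "nat \<Rightarrow> 'a set \<Rightarrow> 'a set set \<Rightarrow> 'a set set" where
  "paving_indep l E \<C> = {X. X \<subseteq> E \<and> card X \<le> l + 1 \<and> X \<notin> \<C>}"

lemma paving_indep_augment:
  assumes closed: "elimination_closed l \<C>" and card_\<C>: "\<forall>C\<in>\<C>. card C = l + 1"
    and "finite E" and X: "X \<in> paving_indep l E \<C>" and Y: "Y \<in> paving_indep l E \<C>"
    and less: "card X < card Y"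
  shows "\<exists>e\<in>Y - X. insert e X \<in> paving_indep l E \<C>"
proof -
  have "finite X" "finite Y"
    using X Y \<open>finite E\<close> finite_subset unfolding paving_indep_def by auto
  then have "Y - X \<noteq> {}"
    using less by (metis Diff_eq_empty_iff card_mono leD)
  then obtain e0 where e0: "e0 \<in> Y - X"
    by blast
  show ?thesis
  proof (cases "card X < l")
    case True
    then have "insert e0 X \<in> paving_indep l E \<C>"
      using e0 X Y \<open>finite X\<close> card_\<C> unfolding paving_indep_def by auto
    then show ?thesis
      using e0 by blast
  next
    case False
    then have "card X = l" "card Y = l + 1"
      using X Y less unfolding paving_indep_def by auto
    show ?thesis
    proof (rule ccontr)
      assume "\<not> ?thesis"
      then have "insert e X \<in> \<C>" if "e \<in> Y - X" for e
        using that X Y \<open>finite X\<close> \<open>card X = l\<close> unfolding paving_indep_def by auto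
      moreover have "card (Y \<inter> (Y - X)) \<noteq> 0"
        using e0 \<open>finite Y\<close> by auto
      then obtain m where "card (Y \<inter> (Y - X)) = Suc m"
        using not0_implies_Suc by blast
      ultimately have "Y \<in> \<C>"
        using elimination_closed_fan[OF closed \<open>finite X\<close> \<open>card X = l\<close>, of "Y - X" Y]
          \<open>card Y = l + 1\<close> by blast
      then show False
        using Y unfolding paving_indep_def by blast
    qed
  qed
qed

lemma matroid_paving_indep:
  assumes "elimination_closed l \<C>" "\<forall>C\<in>\<C>. card C = l + 1" "finite E"
  shows "matroid E (paving_indep l E \<C>)"
  unfolding matroid_def
proof (intro conjI allI impI ballI)
  show "{} \<in> paving_indep l E \<C>"
    using assms(2) unfolding paving_indep_def by force
next
  fix X Y assume XY: "X \<in> paving_indep l E \<C> \<and> Y \<subseteq> X"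
  then have X: "X \<subseteq> E" "card X \<le> l + 1" "X \<notin> \<C>"
    unfolding paving_indep_def by auto
  then have "finite X"
    using \<open>finite E\<close> finite_subset by blast
  then have "card Y \<le> card X"
    using XY card_mono by blast
  moreover have "Y \<notin> \<C>"
  proof
    assume "Y \<in> \<C>"
    then have "Y = X"
      using assms(2) X(2) XY \<open>card Y \<le> card X\<close> card_subset_eq[OF \<open>finite X\<close>] by simp
    then show False
      using X(3) \<open>Y \<in> \<C>\<close> by blast
  qed
  ultimately show "Y \<in> paving_indep l E \<C>"
    using XY X unfolding paving_indep_def by auto
next
  fix X Y assume "X \<in> paving_indep l E \<C> \<and> Y \<in> paving_indep l E \<C> \<and> card X < card Y"
  then show "\<exists>e\<in>Y - X. insert e X \<in> paving_indep l E \<C>"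
    using paving_indep_augment[OF assms] by blast
next
  show "finite E"
    by (rule assms(3))
next
  show "X \<subseteq> E" if "X \<in> paving_indep l E \<C>" for X
    using that unfolding paving_indep_def by blast
qed

lemma generic_paving_indep:
  assumes "\<forall>C\<in>\<C>. card C = l + 1"
  shows "generic l E (paving_indep l E \<C>)"
  unfolding generic_def
proof (intro ballI notI)
  fix C assume "C \<in> circuits E (paving_indep l E \<C>)" "card C \<le> l"
  then have "C \<in> \<C>"
    unfolding circuits_def paving_indep_def by auto
  then show False
    using assms \<open>card C \<le> l\<close> by auto
qed

lemma circuits_paving_indep:
  assumes "\<forall>C\<in>\<C>. C \<subseteq> E \<and> card C = l + 1"
  shows "{C \<in> circuits E (paving_indep l E \<C>). card C = l + 1} = \<C>"
proof (intro equalityI subsetI)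
  fix C assume "C \<in> {C \<in> circuits E (paving_indep l E \<C>). card C = l + 1}"
  then show "C \<in> \<C>"
    unfolding circuits_def paving_indep_def by simp
next
  fix C assume C: "C \<in> \<C>"
  then have "C \<subseteq> E" "card C = l + 1"
    using assms by auto
  have "D \<in> paving_indep l E \<C>" if "D \<subset> C" for D
  proof -
    have "finite C"
      using \<open>card C = l + 1\<close> by (intro card_ge_0_finite) simp
    then have "card D < l + 1"
      using that \<open>card C = l + 1\<close> psubset_card_mono by metis
    moreover from this have "D \<notin> \<C>"
      using assms by auto
    moreover have "D \<subseteq> E"
      using that \<open>C \<subseteq> E\<close> by blast
    ultimately show ?thesis
      unfolding paving_indep_def by simp
  qed
  moreover have "C \<notin> paving_indep l E \<C>"
    using C unfolding paving_indep_def by simp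
  ultimately show "C \<in> {C \<in> circuits E (paving_indep l E \<C>). card C = l + 1}"
    using \<open>C \<subseteq> E\<close> \<open>card C = l + 1\<close> unfolding circuits_def by simp
qed

lemma matroid_finite: "matroid E I \<Longrightarrow> finite E"
  unfolding matroid_def by blast

lemma matroid_augment:
  "matroid E I \<Longrightarrow> X \<in> I \<Longrightarrow> Y \<in> I \<Longrightarrow> card X < card Y \<Longrightarrow> \<exists>e\<in>Y - X. insert e X \<in> I"
  unfolding matroid_def by blast

lemma dependent_contains_circuit:
  assumes "finite E" "D \<subseteq> E" "D \<notin> I"
  shows "\<exists>C\<subseteq>D. C \<in> circuits E I"
proof -
  obtain C where C: "C \<subseteq> D" "C \<notin> I"
    and least: "\<And>C'. C' \<subseteq> D \<and> C' \<notin> I \<Longrightarrow> card C \<le> card C'"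
    using ex_has_least_nat[where P = "\<lambda>C. C \<subseteq> D \<and> C \<notin> I" and m = card and k = D] assms(3) by auto
  have "finite C"
    using finite_subset[OF subset_trans[OF C(1) assms(2)] assms(1)] .
  have "D' \<in> I" if "D' \<subset> C" for D'
  proof -
    have "card D' < card C"
      using \<open>finite C\<close> that by (rule psubset_card_mono)
    moreover have "D' \<subseteq> D"
      using that C(1) by blast
    ultimately show ?thesis
      using least[of D'] by (meson leD)
  qed
  then have "C \<in> circuits E I"
    using C assms(2) unfolding circuits_def by blast
  then show ?thesis
    using C(1) by blast
qed

lemma generic_small_indep:
  assumes "generic l E I" "finite E" "X \<subseteq> E" "card X \<le> l"
  shows "X \<in> I"
proof (rule ccontr)
  assume "X \<notin> I"
  then obtain C where "C \<subseteq> X" "C \<in> circuits E I"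
    using dependent_contains_circuit[OF assms(2,3)] by blast
  moreover have "card C \<le> card X"
    using card_mono[OF finite_subset[OF assms(3,2)] \<open>C \<subseteq> X\<close>] .
  ultimately show False
    using assms(1,4) unfolding generic_def by auto
qed

lemma circuits_union_subset_dependent:
  assumes "matroid E I" and C1: "C1 \<in> circuits E I" and C2: "C2 \<in> circuits E I"
    and card_C: "card C1 = k" "card C2 = k" and card_union: "card (C1 \<union> C2) = k + 1"
    and C3: "C3 \<subseteq> C1 \<union> C2" "card C3 = k"
  shows "C3 \<notin> I"
proof
  assume "C3 \<in> I"
  have "C1 \<subseteq> E" "C2 \<subseteq> E" "C1 \<notin> I" "C2 \<notin> I"
    using C1 C2 unfolding circuits_def by auto
  then have "finite C1" "finite C2"
    using matroid_finite[OF assms(1)] finite_subset by auto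
  have card_inter: "card (C1 \<inter> C2) + 1 = k"
    using card_Un_Int[OF \<open>finite C1\<close> \<open>finite C2\<close>] card_C card_union by simp
  have "C1 \<inter> C2 \<noteq> C1"
  proof
    assume "C1 \<inter> C2 = C1"
    then show False
      using card_inter card_C(1) by simp
  qed
  then have "C1 \<inter> C2 \<subset> C1"
    by blast
  then have "C1 \<inter> C2 \<in> I"
    using C1 unfolding circuits_def by blast
  moreover have "card (C1 \<inter> C2) < card C3"
    using card_inter C3(2) by simp
  ultimately obtain e where e: "e \<in> C3 - C1 \<inter> C2" "insert e (C1 \<inter> C2) \<in> I"
    using matroid_augment[OF assms(1) _ \<open>C3 \<in> I\<close>] by blast
  have card_insert: "card (insert e (C1 \<inter> C2)) = k"
    using e card_inter \<open>finite C1\<close> by simp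
  have "insert e (C1 \<inter> C2) = C1 \<or> insert e (C1 \<inter> C2) = C2"
  proof (cases "e \<in> C1")
    case True
    then have sub: "insert e (C1 \<inter> C2) \<subseteq> C1"
      by blast
    then show ?thesis
      using card_subset_eq[OF \<open>finite C1\<close> sub] card_insert card_C(1) by simp
  next
    case False
    then have sub: "insert e (C1 \<inter> C2) \<subseteq> C2"
      using e(1) C3(1) by blast
    then show ?thesis
      using card_subset_eq[OF \<open>finite C2\<close> sub] card_insert card_C(2) by simp
  qed
  then show False
    using e(2) \<open>C1 \<notin> I\<close> \<open>C2 \<notin> I\<close> by auto
qed

lemma elimination_closed_generic_circuits:
  assumes matroid: "matroid E I" and generic: "generic l E I"
  shows "elimination_closed l {C \<in> circuits E I. card C = l + 1}"
  unfolding elimination_closed_def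
proof (intro ballI impI allI, elim conjE)
  fix C1 C2 C3
  assume C1: "C1 \<in> {C \<in> circuits E I. card C = l + 1}"
    and C2: "C2 \<in> {C \<in> circuits E I. card C = l + 1}"
    and "card (C1 \<union> C2) = l + 2" and C3: "C3 \<subseteq> C1 \<union> C2" "card C3 = l + 1"
  have "finite E"
    using matroid by (rule matroid_finite)
  have "C3 \<subseteq> E"
    using C1 C2 C3(1) unfolding circuits_def by blast
  have "C3 \<notin> I"
    using circuits_union_subset_dependent[OF matroid, of C1 C2 "l + 1" C3] C1 C2 C3
      \<open>card (C1 \<union> C2) = l + 2\<close> by simp
  moreover have "D \<in> I" if "D \<subset> C3" for D
  proof (rule generic_small_indep[OF generic \<open>finite E\<close>])
    show "D \<subseteq> E"
      using that \<open>C3 \<subseteq> E\<close> by blast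
    have "card D < card C3"
      using psubset_card_mono[OF finite_subset[OF \<open>C3 \<subseteq> E\<close> \<open>finite E\<close>] that] .
    then show "card D \<le> l"
      using C3(2) by simp
  qed
  ultimately show "C3 \<in> {C \<in> circuits E I. card C = l + 1}"
    using \<open>C3 \<subseteq> E\<close> C3(2) unfolding circuits_def by blast
qed

theorem lemma2p2:
  fixes l n :: nat and \<C> :: "nat set set"
  assumes "l \<ge> 1" and "n \<ge> 1"
    and "\<forall>C\<in>\<C>. C \<subseteq> {1..n} \<and> card C = l + 1"
  shows "(\<forall>C1\<in>\<C>. \<forall>C2\<in>\<C>. card (C1 \<union> C2) = l + 2 \<longrightarrow>
            (\<forall>C3. C3 \<subseteq> C1 \<union> C2 \<and> card C3 = l + 1 \<longrightarrow> C3 \<in> \<C>))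
         \<longleftrightarrow>
         (\<exists>I. matroid {1..n} I \<and> generic l {1..n} I \<and>
              {C \<in> circuits {1..n} I. card C = l + 1} = \<C>)"
  unfolding elimination_closed_def[symmetric]
proof
  assume "elimination_closed l \<C>"
  moreover have "\<forall>C\<in>\<C>. card C = l + 1"
    using assms(3) by blast
  ultimately have "matroid {1..n} (paving_indep l {1..n} \<C>)"
    by (simp add: matroid_paving_indep)
  moreover have "generic l {1..n} (paving_indep l {1..n} \<C>)"
    using \<open>\<forall>C\<in>\<C>. card C = l + 1\<close> by (rule generic_paving_indep)
  moreover have "{C \<in> circuits {1..n} (paving_indep l {1..n} \<C>). card C = l + 1} = \<C>"
    using assms(3) by (rule circuits_paving_indep)
  ultimately show "\<exists>I. matroid {1..n} I \<and> generic l {1..n} I \<and>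
               {C \<in> circuits {1..n} I. card C = l + 1} = \<C>"
    by blast
next
  assume "\<exists>I. matroid {1..n} I \<and> generic l {1..n} I \<and>
              {C \<in> circuits {1..n} I. card C = l + 1} = \<C>"
  then show "elimination_closed l \<C>"
    using elimination_closed_generic_circuits by blast
qed

end
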